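(* Let $Z=\{z_n\}_{n\in\mathbb{N}}$ be an almost periodic divisor in a strip $S$, let $S^0$ be a substrip with $\overline{S^0}\subset S$, let $\varepsilon>0$, and let $\tau_1,\tau_2\in E_{\varepsilon,S^0}$. Then there is a bijection $\sigma:\mathbb{N}\to\mathbb{N}$ such that for every $j$ with $z_j\in S^0$ and $\operatorname{dist}(z_j,\partial S^0)>\varepsilon$, $$|z_j+i(\tau_1-\tau_2)-z_{\sigma(j)}|<2\varepsilon,\qquad |z_j-i(\tau_1-\tau_2)-z_{\sigma^{-1}(j)}|<2\varepsilon.$$
   Context: A (vertical) strip is a set $\{z\in\mathbb{C}: a<\operatorname{Re} z<b\}$ with $-\infty\le a<b\le\infty$; a substrip of $S$ is a strip of this form contained in $S$. A divisor in $S$ is a sequence $\{z_j\}\subset S$ without limit points in $S$ (points may repeat finitely often, encoding multiplicity); $|Z|$ denotes its set of points. A set $E\subset\mathbb{R}$ is relatively dense if there is $L<\infty$ with $E\cap[\alpha,\alpha+L]\ne\emptyset$ for every $\alpha\in\mathbb{R}$. For $\varepsilon>0$ and a substrip $S^0$ with $\overline{S^0}\subset S$, $E_{\varepsilon,S^0}$ denotes the set of all $\tau\in\mathbb{R}$ for which there exists a bijection $\sigma=\sigma_\tau:\mathbb{N}\to\mathbb{N}$ such that for every $j$, ($z_j\in S^0$ or $z_{\sigma(j)}\in S^0$) implies $|z_j+i\tau-z_{\sigma(j)}|<\varepsilon$. The divisor $Z$ is almost periodic if $E_{\varepsilon,S^0}$ is relatively dense for every such $\varepsilon$ and $S^0$.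 *)

theory Defs
  imports "HOL-Analysis.Analysis"
begin

definition is_strip :: "complex set \<Rightarrow> bool" where
  "is_strip S \<longleftrightarrow> (\<exists>a b :: ereal. a < b \<and> S = {z. a < ereal (Re z) \<and> ereal (Re z) < b})"

definition is_substrip :: "complex set \<Rightarrow> complex set \<Rightarrow> bool" where
  "is_substrip S0 S \<longleftrightarrow> is_strip S0 \<and> S0 \<subseteq> S"

definition is_divisor :: "(nat \<Rightarrow> complex) \<Rightarrow> complex set \<Rightarrow> bool" where
  "is_divisor z S \<longleftrightarrow> range z \<subseteq> S \<and>
     (\<forall>w\<in>S. \<exists>r>0. finite {n. dist (z n) w < r})"

definition rel_dense :: "real set \<Rightarrow> bool" where
  "rel_dense E \<longleftrightarrow> (\<exists>L::real. \<forall>\<alpha>. E \<inter> {\<alpha>..\<alpha>+L} \<noteq> {})"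

definition E_set :: "(nat \<Rightarrow> complex) \<Rightarrow> real \<Rightarrow> complex set \<Rightarrow> real set" where
  "E_set z \<epsilon> S0 = {\<tau>. \<exists>\<sigma>::nat \<Rightarrow> nat. bij \<sigma> \<and>
      (\<forall>j. (z j \<in> S0 \<or> z (\<sigma> j) \<in> S0) \<longrightarrow>
            cmod (z j + \<i> * complex_of_real \<tau> - z (\<sigma> j)) < \<epsilon>)}"

definition almost_periodic_divisor :: "(nat \<Rightarrow> complex) \<Rightarrow> complex set \<Rightarrow> bool" where
  "almost_periodic_divisor z S \<longleftrightarrow> is_divisor z S \<and>
     (\<forall>\<epsilon>>0. \<forall>S0. is_substrip S0 S \<and> closure S0 \<subseteq> S \<longrightarrow> rel_dense (E_set z \<epsilon> S0))"

end

theory Submission imports Defs begin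

text \<open>If the bijections \<sigma>1, \<sigma>2 realise the shifts \<tau>1, \<tau>2, then \<sigma>1 \<circ> inv \<sigma>2
  realises \<tau>1 - \<tau>2 up to 2\<epsilon>. For z j in S0, the point z k with k = inv \<sigma>2 j is an
  \<epsilon>-perturbed vertical shift of z j; since the strip S0 is invariant under vertical shifts
  and z j is more than \<epsilon> away from its boundary, z k still lies in S0, so \<sigma>1 moves it by
  \<tau>1 up to another \<epsilon>. Swapping the roles of \<sigma>1 and \<sigma>2 gives the estimate for the
  inverse \<sigma>2 \<circ> inv \<sigma>1.\<close>

definition shift_matched ::
    "(nat \<Rightarrow> complex) \<Rightarrow> complex set \<Rightarrow> real \<Rightarrow> real \<Rightarrow> (nat \<Rightarrow> nat) \<Rightarrow> bool" where
  "shift_matched z S0 \<epsilon> \<tau> \<sigma> \<longleftrightarrow>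
     (\<forall>j. (z j \<in> S0 \<or> z (\<sigma> j) \<in> S0) \<longrightarrow> cmod (z j + \<i> * complex_of_real \<tau> - z (\<sigma> j)) < \<epsilon>)"

lemma mem_E_set_iff: "\<tau> \<in> E_set z \<epsilon> S0 \<longleftrightarrow> (\<exists>\<sigma>. bij \<sigma> \<and> shift_matched z S0 \<epsilon> \<tau> \<sigma>)"
  unfolding E_set_def shift_matched_def by blast

lemma ball_subset_if_frontier_dist_ge:
  fixes p :: "'a::real_normed_vector"
  assumes "p \<in> S" and "\<forall>w\<in>frontier S. d \<le> dist p w"
  shows "ball p d \<subseteq> S"
proof (rule ccontr)
  assume out: "\<not> ball p d \<subseteq> S"
  then have "0 < d" using ball_eq_empty[of p d] by fastforce
  with \<open>p \<in> S\<close> have "ball p d \<inter> S \<noteq> {}" by force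
  with out obtain w where "w \<in> ball p d" "w \<in> frontier S"
    using connected_Int_frontier[OF connected_ball, of p d S] by blast
  then have "dist p w < d" "d \<le> dist p w" using assms(2) by auto
  then show False by simp
qed

lemma strip_mem_iff_Re_eq:
  assumes "is_strip S" and "Re q = Re w"
  shows "q \<in> S \<longleftrightarrow> w \<in> S"
  using assms unfolding is_strip_def by auto

lemma strip_mem_if_Re_dist_less:
  assumes "is_strip S" and "p \<in> S" and "\<forall>w\<in>frontier S. d \<le> dist p w"
    and "\<bar>Re q - Re p\<bar> < d"
  shows "q \<in> S"
proof -
  let ?w = "Complex (Re q) (Im p)"
  have "dist p ?w = \<bar>Re q - Re p\<bar>"
    by (simp add: dist_norm cmod_def)
  with assms(4) have "?w \<in> ball p d" by simp
  with ball_subset_if_frontier_dist_ge[OF assms(2,3)] have "?w \<in> S" by blast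
  then show ?thesis using strip_mem_iff_Re_eq[OF assms(1), of q ?w] by simp
qed

lemma shift_matched_compose_inv:
  assumes "is_strip S0" and "bij \<sigma>2"
    and m1: "shift_matched z S0 \<epsilon> \<tau>1 \<sigma>1" and m2: "shift_matched z S0 \<epsilon> \<tau>2 \<sigma>2"
    and "z j \<in> S0" and "d > \<epsilon>" and "\<forall>w\<in>frontier S0. d \<le> dist (z j) w"
  shows "cmod (z j + \<i> * complex_of_real (\<tau>1 - \<tau>2) - z ((\<sigma>1 \<circ> inv \<sigma>2) j)) < 2 * \<epsilon>"
proof -
  define k where "k = inv \<sigma>2 j"
  have "\<sigma>2 k = j"
    unfolding k_def using \<open>bij \<sigma>2\<close> by (simp add: bij_is_surj surj_f_inv_f)
  with m2 \<open>z j \<in> S0\<close> have err2: "cmod (z k + \<i> * complex_of_real \<tau>2 - z j) < \<epsilon>"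
    unfolding shift_matched_def by auto
  then have "\<bar>Re (z k) - Re (z j)\<bar> < d"
    using abs_Re_le_cmod[of "z k + \<i> * complex_of_real \<tau>2 - z j"] \<open>d > \<epsilon>\<close> by simp
  then have "z k \<in> S0"
    using strip_mem_if_Re_dist_less assms(1,5,7) by blast
  with m1 have err1: "cmod (z k + \<i> * complex_of_real \<tau>1 - z (\<sigma>1 k)) < \<epsilon>"
    unfolding shift_matched_def by blast
  have "z j + \<i> * complex_of_real (\<tau>1 - \<tau>2) - z ((\<sigma>1 \<circ> inv \<sigma>2) j)
      = (z k + \<i> * complex_of_real \<tau>1 - z (\<sigma>1 k)) - (z k + \<i> * complex_of_real \<tau>2 - z j)"
    unfolding k_def by (simp add: algebra_simps)
  also have "cmod \<dots> < \<epsilon> + \<epsilon>"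
    using norm_triangle_ineq4 err1 err2 by (rule order_le_less_trans[OF _ add_strict_mono])
  finally show ?thesis by simp
qed

theorem lemma1:
  fixes z :: "nat \<Rightarrow> complex" and S S0 :: "complex set" and \<epsilon> \<tau>1 \<tau>2 :: real
  assumes "is_strip S"
    and "almost_periodic_divisor z S"
    and "is_substrip S0 S" and "closure S0 \<subseteq> S"
    and "\<epsilon> > 0"
    and "\<tau>1 \<in> E_set z \<epsilon> S0" and "\<tau>2 \<in> E_set z \<epsilon> S0"
  shows "\<exists>\<sigma>::nat \<Rightarrow> nat. bij \<sigma> \<and>
    (\<forall>j. z j \<in> S0 \<and> (\<exists>d>\<epsilon>. \<forall>w\<in>frontier S0. d \<le> dist (z j) w) \<longrightarrow>
       cmod (z j + \<i> * complex_of_real (\<tau>1 - \<tau>2) - z (\<sigma> j)) < 2 * \<epsilon> \<and>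
       cmod (z j - \<i> * complex_of_real (\<tau>1 - \<tau>2) - z (inv \<sigma> j)) < 2 * \<epsilon>)"
proof -
  have strip: "is_strip S0" using assms(3) unfolding is_substrip_def by blast
  obtain \<sigma>1 where "bij \<sigma>1" and m1: "shift_matched z S0 \<epsilon> \<tau>1 \<sigma>1"
    using assms(6) mem_E_set_iff by blast
  obtain \<sigma>2 where "bij \<sigma>2" and m2: "shift_matched z S0 \<epsilon> \<tau>2 \<sigma>2"
    using assms(7) mem_E_set_iff by blast
  have inv_comp: "inv (\<sigma>1 \<circ> inv \<sigma>2) = \<sigma>2 \<circ> inv \<sigma>1"
    using o_inv_distrib[OF \<open>bij \<sigma>1\<close> bij_imp_bij_inv[OF \<open>bij \<sigma>2\<close>]] inv_inv_eq[OF \<open>bij \<sigma>2\<close>]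
    by simp
  have neg: "z j - \<i> * complex_of_real (\<tau>1 - \<tau>2) = z j + \<i> * complex_of_real (\<tau>2 - \<tau>1)"
    for j by (simp add: algebra_simps)
  show ?thesis
  proof (intro exI[of _ "\<sigma>1 \<circ> inv \<sigma>2"] conjI allI impI)
    show "bij (\<sigma>1 \<circ> inv \<sigma>2)"
      using \<open>bij \<sigma>1\<close> \<open>bij \<sigma>2\<close> by (intro bij_comp bij_imp_bij_inv)
  next
    fix j assume "z j \<in> S0 \<and> (\<exists>d>\<epsilon>. \<forall>w\<in>frontier S0. d \<le> dist (z j) w)"
    then obtain d where "z j \<in> S0" "d > \<epsilon>" "\<forall>w\<in>frontier S0. d \<le> dist (z j) w"
      by blast
    note deep = this
    show "cmod (z j + \<i> * complex_of_real (\<tau>1 - \<tau>2) - z ((\<sigma>1 \<circ> inv \<sigma>2) j)) < 2 * \<epsilon>"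
      by (rule shift_matched_compose_inv[OF strip \<open>bij \<sigma>2\<close> m1 m2 deep])
    show "cmod (z j - \<i> * complex_of_real (\<tau>1 - \<tau>2) - z (inv (\<sigma>1 \<circ> inv \<sigma>2) j)) < 2 * \<epsilon>"
      unfolding neg inv_comp by (rule shift_matched_compose_inv[OF strip \<open>bij \<sigma>1\<close> m2 m1 deep])
  qed
qed

end
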